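(* Let $\mathcal E$ be a relation on closed values and $v_0,v_1$ closed values with $v_0\approx^p_{\mathcal E}v_1$. Then for every context $C$ such that $C[v_0]$ and $C[v_1]$ are closed, $C[v_0]\approx^p_{\mathcal E}C[v_1]$.
   Context: Terms of $\lambda_S$: $t ::= x \mid \lambda x.t \mid t\,t \mid \mathcal{S}k.t \mid \langle t\rangle$ (shift binds $k$; $\langle\cdot\rangle$ reset), up to $\alpha$-conversion. Values $v::=\lambda x.t$. Pure contexts $E ::= \Box \mid v\,E \mid E\,t$; evaluation contexts $F ::= \Box \mid v\,F \mid F\,t \mid \langle F\rangle$; contexts $C ::= \Box \mid \lambda x.C \mid t\,C \mid C\,t \mid \mathcal{S}k.C \mid \langle C\rangle$. Reduction: $F[(\lambda x.t)v]\to F[t\{v/x\}]$; $F[\langle E[\mathcal Sk.t]\rangle]\to F[\langle t\{\lambda x.\langle E[x]\rangle/k\}\rangle]$ ($x\notin\mathrm{fv}(E)$); $F[\langle v\rangle]\to F[v]$; $\to^*$ reflexive-transitive closure. Program: term $\langle t\rangle$ (ranged over by $p$). Closures: for $R$ a relation on closed terms, $\widetilde R$ is the smallest relation containing $R$, all $(x,x)$, closed under all term constructors, restricted to closed terms; $\widehat R$ is the smallest relation on closed evaluation contexts with $\Box\widehat R\Box$, $v_0F_0\widehat Rv_1F_1$ if $F_0\widehat RF_1,v_0\widetilde Rv_1$; $F_0t_0\widehat RF_1t_1$ if $F_0\widehat RF_1,t_0\widetilde Rt_1$; $\langle F_0\rangle\widehat R\langle F_1\rangle$ if $F_0\widehat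 RF_1$. Environmental bisimilarity for programs: an environment $\mathcal E$ is a relation on closed values; an environmental relation $\mathcal X$ is a set of environments and triples $(\mathcal E,t_0,t_1)$, $t_0,t_1$ closed, written $t_0\mathcal X_{\mathcal E}t_1$. $\mathcal X$ is an environmental bisimulation for programs if (1) if $t_0\mathcal X_{\mathcal E}t_1$ and $t_0,t_1$ are not both programs, then for all pure $E_0\widehat{\mathcal E}E_1$, $\langle E_0[t_0]\rangle\mathcal X_{\mathcal E}\langle E_1[t_1]\rangle$; (2) if $p_0\mathcal X_{\mathcal E}p_1$: (a) $p_0\to p_0'$ (program) implies $p_1\to^*p_1'$ (program) with $p_0'\mathcal X_{\mathcal E}p_1'$; (b) $p_0\to v_0$ implies $p_1\to^*v_1$ and $\{(v_0,v_1)\}\cup\mathcal E\in\mathcal X$; (c) symmetric conditions; (3) for $\mathcal E\in\mathcal X$, $(\lambda x.t_0)\mathcal E(\lambda x.t_1)$ and $v_0\widetilde{\mathcal E}v_1$ imply $t_0\{v_0/x\}\mathcal X_{\mathcal E}t_1\{v_1/x\}$. $\approx^p$ is the largest such relation; $t_0\approx^p_{\mathcal E}t_1$ means $(\mathcal E,t_0,t_1)\in\approx^p$. *)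

theory Defs
  imports Main
begin

datatype trm = Var nat | Lam trm | App trm trm | Shift trm | Reset trm
  (* Lam t: lambda binding index 0 in t;  Shift t: shift binding k as index 0 in t *)

fun closed_at :: "nat \<Rightarrow> trm \<Rightarrow> bool" where
  "closed_at k (Var n) = (n < k)"
| "closed_at k (Lam t) = closed_at (Suc k) t"
| "closed_at k (App s t) = (closed_at k s \<and> closed_at k t)"
| "closed_at k (Shift t) = closed_at (Suc k) t"
| "closed_at k (Reset t) = closed_at k t"

definition closed :: "trm \<Rightarrow> bool" where
  "closed t = closed_at 0 t"

definition is_val :: "trm \<Rightarrow> bool" where
  "is_val t = (\<exists>b. t = Lam b)"

definition is_prog :: "trm \<Rightarrow> bool" where
  "is_prog t = (\<exists>b. t = Reset b)"

fun lift :: "nat \<Rightarrow> trm \<Rightarrow> trm" where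
  "lift k (Var n) = (if n < k then Var n else Var (Suc n))"
| "lift k (Lam t) = Lam (lift (Suc k) t)"
| "lift k (App s t) = App (lift k s) (lift k t)"
| "lift k (Shift t) = Shift (lift (Suc k) t)"
| "lift k (Reset t) = Reset (lift k t)"

fun subst :: "nat \<Rightarrow> trm \<Rightarrow> trm \<Rightarrow> trm" where
  "subst k s (Var n) = (if n < k then Var n else if n = k then s else Var (n - 1))"
| "subst k s (Lam t) = Lam (subst (Suc k) (lift 0 s) t)"
| "subst k s (App t u) = App (subst k s t) (subst k s u)"
| "subst k s (Shift t) = Shift (subst (Suc k) (lift 0 s) t)"
| "subst k s (Reset t) = Reset (subst k s t)"

datatype ctx = Hole | CLam ctx | CAppR trm ctx | CAppL ctx trm | CShift ctx | CReset ctx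

fun plug :: "ctx \<Rightarrow> trm \<Rightarrow> trm" where
  "plug Hole t = t"
| "plug (CLam C) t = Lam (plug C t)"
| "plug (CAppR s C) t = App s (plug C t)"
| "plug (CAppL C s) t = App (plug C t) s"
| "plug (CShift C) t = Shift (plug C t)"
| "plug (CReset C) t = Reset (plug C t)"

fun ctx_lift :: "nat \<Rightarrow> ctx \<Rightarrow> ctx" where
  "ctx_lift k Hole = Hole"
| "ctx_lift k (CLam C) = CLam (ctx_lift (Suc k) C)"
| "ctx_lift k (CAppR s C) = CAppR (lift k s) (ctx_lift k C)"
| "ctx_lift k (CAppL C s) = CAppL (ctx_lift k C) (lift k s)"
| "ctx_lift k (CShift C) = CShift (ctx_lift (Suc k) C)"
| "ctx_lift k (CReset C) = CReset (ctx_lift k C)"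

fun pure_ctx :: "ctx \<Rightarrow> bool" where
  "pure_ctx Hole = True"
| "pure_ctx (CAppR v E) = (is_val v \<and> pure_ctx E)"
| "pure_ctx (CAppL E t) = pure_ctx E"
| "pure_ctx _ = False"

fun eval_ctx :: "ctx \<Rightarrow> bool" where
  "eval_ctx Hole = True"
| "eval_ctx (CAppR v F) = (is_val v \<and> eval_ctx F)"
| "eval_ctx (CAppL F t) = eval_ctx F"
| "eval_ctx (CReset F) = eval_ctx F"
| "eval_ctx _ = False"

inductive step :: "trm \<Rightarrow> trm \<Rightarrow> bool" where
  beta: "eval_ctx F \<Longrightarrow> is_val v \<Longrightarrow>
     step (plug F (App (Lam t) v)) (plug F (subst 0 v t))"
| shift: "eval_ctx F \<Longrightarrow> pure_ctx E \<Longrightarrow>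
     step (plug F (Reset (plug E (Shift t))))
          (plug F (Reset (subst 0 (Lam (Reset (plug (ctx_lift 0 E) (Var 0)))) t)))"
| reset: "eval_ctx F \<Longrightarrow> is_val v \<Longrightarrow>
     step (plug F (Reset v)) (plug F v)"

abbreviation steps :: "trm \<Rightarrow> trm \<Rightarrow> bool" where
  "steps \<equiv> step\<^sup>*\<^sup>*"

inductive tcomp :: "(trm \<times> trm) set \<Rightarrow> trm \<Rightarrow> trm \<Rightarrow> bool" for R where
  base: "(a, b) \<in> R \<Longrightarrow> tcomp R a b"
| var: "tcomp R (Var n) (Var n)"
| lam: "tcomp R a b \<Longrightarrow> tcomp R (Lam a) (Lam b)"
| app: "tcomp R a b \<Longrightarrow> tcomp R c d \<Longrightarrow> tcomp R (App a c) (App b d)"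
| shft: "tcomp R a b \<Longrightarrow> tcomp R (Shift a) (Shift b)"
| rst: "tcomp R a b \<Longrightarrow> tcomp R (Reset a) (Reset b)"

definition tclos :: "(trm \<times> trm) set \<Rightarrow> (trm \<times> trm) set" where
  "tclos R = {(a, b). tcomp R a b \<and> closed a \<and> closed b}"

inductive cclos :: "(trm \<times> trm) set \<Rightarrow> ctx \<Rightarrow> ctx \<Rightarrow> bool" for R where
  hole: "cclos R Hole Hole"
| arg: "cclos R F0 F1 \<Longrightarrow> is_val v0 \<Longrightarrow> is_val v1 \<Longrightarrow> (v0, v1) \<in> tclos R \<Longrightarrow>
     cclos R (CAppR v0 F0) (CAppR v1 F1)"
| fn: "cclos R F0 F1 \<Longrightarrow> (t0, t1) \<in> tclos R \<Longrightarrow> cclos R (CAppL F0 t0) (CAppL F1 t1)"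
| rst: "cclos R F0 F1 \<Longrightarrow> cclos R (CReset F0) (CReset F1)"

type_synonym env = "(trm \<times> trm) set"
type_synonym envrel = "env set \<times> (env \<times> trm \<times> trm) set"

definition is_env :: "env \<Rightarrow> bool" where
  "is_env E = (\<forall>(v0, v1)\<in>E. closed v0 \<and> is_val v0 \<and> closed v1 \<and> is_val v1)"

definition env_relation :: "envrel \<Rightarrow> bool" where
  "env_relation X = ((\<forall>E\<in>fst X. is_env E) \<and>
     (\<forall>(E, t0, t1)\<in>snd X. is_env E \<and> closed t0 \<and> closed t1))"

definition env_bisim :: "envrel \<Rightarrow> bool" where
  "env_bisim X = (env_relation X \<and>
    \<comment> \<open>(1)\<close>
    (\<forall>E t0 t1. (E, t0, t1) \<in> snd X \<longrightarrow> \<not> (is_prog t0 \<and> is_prog t1) \<longrightarrow>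
       (\<forall>E0 E1. pure_ctx E0 \<and> pure_ctx E1 \<and> cclos E E0 E1 \<longrightarrow>
          (E, Reset (plug E0 t0), Reset (plug E1 t1)) \<in> snd X)) \<and>
    \<comment> \<open>(2)\<close>
    (\<forall>E p0 p1. (E, p0, p1) \<in> snd X \<longrightarrow> is_prog p0 \<longrightarrow> is_prog p1 \<longrightarrow>
       (\<forall>p0'. step p0 p0' \<longrightarrow> is_prog p0' \<longrightarrow>
          (\<exists>p1'. steps p1 p1' \<and> is_prog p1' \<and> (E, p0', p1') \<in> snd X)) \<and>
       (\<forall>v0. step p0 v0 \<longrightarrow> is_val v0 \<longrightarrow>
          (\<exists>v1. steps p1 v1 \<and> is_val v1 \<and> {(v0, v1)} \<union> E \<in> fst X)) \<and>
       (\<forall>p1'. step p1 p1' \<longrightarrow> is_prog p1' \<longrightarrow>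
          (\<exists>p0'. steps p0 p0' \<and> is_prog p0' \<and> (E, p0', p1') \<in> snd X)) \<and>
       (\<forall>v1. step p1 v1 \<longrightarrow> is_val v1 \<longrightarrow>
          (\<exists>v0. steps p0 v0 \<and> is_val v0 \<and> {(v0, v1)} \<union> E \<in> fst X))) \<and>
    \<comment> \<open>(3)\<close>
    (\<forall>E\<in>fst X. \<forall>t0 t1 v0 v1. (Lam t0, Lam t1) \<in> E \<longrightarrow> (v0, v1) \<in> tclos E \<longrightarrow>
       is_val v0 \<longrightarrow> is_val v1 \<longrightarrow>
       (E, subst 0 v0 t0, subst 0 v1 t1) \<in> snd X))"

definition bisim_p :: "env \<Rightarrow> trm \<Rightarrow> trm \<Rightarrow> bool" where
  "bisim_p E t0 t1 = (\<exists>X. env_bisim X \<and> (E, t0, t1) \<in> snd X)"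

end

theory Submission
  imports Defs
begin

text \<open>
  If \<open>v\<^sub>0 \<approx>\<^sub>E v\<^sub>1\<close> is witnessed by a bisimulation X, clauses (1) and (2b) applied to the
  programs \<open>\<langle>v\<^sub>0\<rangle>, \<langle>v\<^sub>1\<rangle>\<close> put the environment \<open>{(v\<^sub>0, v\<^sub>1)} \<union> E\<close> into X, and \<open>C[v\<^sub>0], C[v\<^sub>1]\<close>
  are related by its compatible closure. So it suffices that the closure of X up to context
  is again a bisimulation: it relates terms related by the compatible closure of an environment
  of X, programs related by X plugged into related evaluation contexts, and the triples of X.
  The only delicate case is a reduction of a compatible pair at a beta-redex whose operators are
  related by the environment alone: clause (3) of X relates the contracta, and clause (1) restores
  the innermost enclosing reset, so that the reducts are related programs in related contexts.
\<close>

section \<open>Closedness, contexts and reduction\<close>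

lemma closed_at_mono: "closed_at k t \<Longrightarrow> k \<le> j \<Longrightarrow> closed_at j t"
  by (induction t arbitrary: k j) auto

lemma lift_closed_at: "closed_at k t \<Longrightarrow> lift k t = t"
  by (induction t arbitrary: k) auto

lemma subst_closed_at: "closed_at k t \<Longrightarrow> subst k s t = t"
  by (induction t arbitrary: k s) auto

lemma closed_at_lift: "closed_at k s \<Longrightarrow> closed_at (Suc k) (lift j s)"
  by (induction s arbitrary: k j) auto

lemma closed_at_subst: "closed_at (Suc k) t \<Longrightarrow> closed_at k s \<Longrightarrow> closed_at k (subst k s t)"
  by (induction t arbitrary: k s) (auto simp: closed_at_lift)

lemma closed_closed_at: "closed t \<Longrightarrow> closed_at k t"
  unfolding closed_def using closed_at_mono by blast

lemma prog_not_val: "is_prog p \<Longrightarrow> \<not> is_val p"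
  by (auto simp: is_prog_def is_val_def)

fun ctx_comp :: "ctx \<Rightarrow> ctx \<Rightarrow> ctx" where
  "ctx_comp Hole B = B"
| "ctx_comp (CLam C) B = CLam (ctx_comp C B)"
| "ctx_comp (CAppR s C) B = CAppR s (ctx_comp C B)"
| "ctx_comp (CAppL C s) B = CAppL (ctx_comp C B) s"
| "ctx_comp (CShift C) B = CShift (ctx_comp C B)"
| "ctx_comp (CReset C) B = CReset (ctx_comp C B)"

lemma plug_ctx_comp [simp]: "plug (ctx_comp A B) t = plug A (plug B t)"
  by (induction A) auto

lemma plug_inject: "plug C a = plug C b \<longleftrightarrow> a = b"
  by (induction C) auto

lemma eval_ctx_comp: "eval_ctx (ctx_comp A B) \<longleftrightarrow> eval_ctx A \<and> eval_ctx B"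
  by (induction A) auto

lemma pure_ctx_comp: "pure_ctx (ctx_comp A B) \<longleftrightarrow> pure_ctx A \<and> pure_ctx B"
  by (induction A) auto

lemma pure_ctx_imp_eval_ctx: "pure_ctx E \<Longrightarrow> eval_ctx E"
  by (induction E rule: pure_ctx.induct) auto

lemma val_plug_eval_ctx: "eval_ctx F \<Longrightarrow> is_val (plug F X) \<longleftrightarrow> F = Hole \<and> is_val X"
  by (cases F) (auto simp: is_val_def)

lemma prog_plug_pure_ctx: "pure_ctx E \<Longrightarrow> is_prog (plug E X) \<longleftrightarrow> E = Hole \<and> is_prog X"
  by (cases E rule: pure_ctx.cases) (auto simp: is_prog_def)

lemma closed_at_plug_eval_ctxD: "eval_ctx F \<Longrightarrow> closed_at k (plug F X) \<Longrightarrow> closed_at k X"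
  by (induction F rule: eval_ctx.induct) auto

lemma closed_at_plug_eval_ctx_replace:
  "eval_ctx F \<Longrightarrow> closed_at k (plug F X) \<Longrightarrow> closed_at k Y \<Longrightarrow> closed_at k (plug F Y)"
  by (induction F rule: eval_ctx.induct) auto

lemma closed_at_plug_ctx_lift:
  "pure_ctx E \<Longrightarrow> closed_at k (plug E X) \<Longrightarrow> closed_at (Suc k) Y \<Longrightarrow>
   closed_at (Suc k) (plug (ctx_lift j E) Y)"
  by (induction E rule: pure_ctx.induct) (auto simp: closed_at_lift)

lemma eval_ctx_not_pure_decomp:
  assumes "eval_ctx F" "\<not> pure_ctx F"
  obtains Fo Ei where "F = ctx_comp Fo (CReset Ei)" "eval_ctx Fo" "pure_ctx Ei"
  using assms
proof (induction F arbitrary: thesis)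
  case (CAppR v G)
  then show ?case by (metis ctx_comp.simps(3) eval_ctx.simps(2) pure_ctx.simps(2))
next
  case (CAppL G t)
  then show ?case by (metis ctx_comp.simps(4) eval_ctx.simps(3) pure_ctx.simps(3))
next
  case (CReset G)
  then show ?case by (metis ctx_comp.simps(1,6) eval_ctx.simps(1,4))
qed auto

lemma eval_ctx_plug_eq_cases:
  assumes "eval_ctx F" "eval_ctx F'" "plug F p = plug F' r" "\<not> is_val p" "\<not> is_val r"
  shows "(\<exists>G. F' = ctx_comp F G) \<or> (\<exists>G. F = ctx_comp F' G \<and> G \<noteq> Hole)"
  using assms
proof (induction F arbitrary: F')
  case (CAppR v G)
  then show ?case by (cases F') (fastforce simp: val_plug_eval_ctx dest: CAppR.IH)+
next
  case (CAppL G t)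
  then show ?case by (cases F') (fastforce simp: val_plug_eval_ctx dest: CAppL.IH)+
next
  case (CReset G)
  then show ?case by (cases F') (fastforce dest: CReset.IH)+
qed auto

inductive contract :: "trm \<Rightarrow> trm \<Rightarrow> bool" where
  beta: "is_val v \<Longrightarrow> contract (App (Lam t) v) (subst 0 v t)"
| shift: "pure_ctx E \<Longrightarrow>
    contract (Reset (plug E (Shift t)))
      (Reset (subst 0 (Lam (Reset (plug (ctx_lift 0 E) (Var 0)))) t))"
| reset: "is_val v \<Longrightarrow> contract (Reset v) v"

lemma step_iff_contract:
  "step a b \<longleftrightarrow> (\<exists>F r s. eval_ctx F \<and> contract r s \<and> a = plug F r \<and> b = plug F s)"
  by (blast elim: step.cases contract.cases intro: step.intros contract.intros)

lemma step_contract: "eval_ctx F \<Longrightarrow> contract r s \<Longrightarrow> step (plug F r) (plug F s)"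
  unfolding step_iff_contract by blast

lemma step_plug_eval_ctx: "step a b \<Longrightarrow> eval_ctx F \<Longrightarrow> step (plug F a) (plug F b)"
  unfolding step_iff_contract by (metis eval_ctx_comp plug_ctx_comp)

lemma steps_plug_eval_ctx: "steps a b \<Longrightarrow> eval_ctx F \<Longrightarrow> steps (plug F a) (plug F b)"
  by (induction rule: rtranclp_induct) (auto intro: rtranclp.rtrancl_into_rtrancl step_plug_eval_ctx)

lemma contract_not_val: "contract r s \<Longrightarrow> \<not> is_val r"
  by (auto elim: contract.cases simp: is_val_def)

lemma closed_at_contract: "contract r s \<Longrightarrow> closed_at 0 r \<Longrightarrow> closed_at 0 s"
proof (induction rule: contract.induct)
  case (shift E t)
  then have "closed_at 1 (plug (ctx_lift 0 E) (Var 0))" "closed_at 1 t"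
    using closed_at_plug_ctx_lift[of E 0 "Shift t" "Var 0" 0]
      closed_at_plug_eval_ctxD[OF pure_ctx_imp_eval_ctx, of E 0 "Shift t"] by auto
  then show ?case by (simp add: closed_at_subst)
qed (auto simp: closed_at_subst)

lemma closed_step: "step a b \<Longrightarrow> closed a \<Longrightarrow> closed b"
  unfolding step_iff_contract closed_def
  by (metis closed_at_contract closed_at_plug_eval_ctxD closed_at_plug_eval_ctx_replace)

lemma contract_plug_prog:
  assumes "contract (plug G p) s" "eval_ctx G" "G \<noteq> Hole" "is_prog p"
  shows False
proof -
  have not_val: "\<not> is_val (plug G' p)" if "eval_ctx G'" for G'
    using that assms(4) val_plug_eval_ctx prog_not_val by blast
  show False
    using assms(1)
  proof cases
    case (beta t v)
    then show False
      using assms(2,3) not_val by (cases G) (auto simp: is_val_def)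
  next
    case (shift E t)
    then obtain G' where G': "eval_ctx G'" "plug G' p = plug E (Shift t)"
      using assms(2,3) by (cases G) auto
    have "\<not> is_val p" "\<not> is_val (Shift t)"
      using assms(4) by (auto simp: is_prog_def is_val_def)
    then consider H where "E = ctx_comp G' H" | H where "G' = ctx_comp E H" "H \<noteq> Hole"
      using eval_ctx_plug_eq_cases G' shift(3) pure_ctx_imp_eval_ctx by metis
    then show False
    proof cases
      case 1
      then have "p = plug H (Shift t)" "pure_ctx H"
        using G'(2) shift(3) by (auto simp: plug_inject pure_ctx_comp)
      then show False using assms(4) prog_plug_pure_ctx by (simp add: is_prog_def)
    next
      case 2
      then have "Shift t = plug H p" "eval_ctx H"
        using G' by (auto simp: plug_inject eval_ctx_comp)
      then show False using \<open>H \<noteq> Hole\<close> by (cases H) auto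
    qed
  next
    case reset
    then show False
      using assms(2,3) not_val by (cases G) auto
  qed
qed

lemma step_plug_prog:
  assumes "step (plug F p) b" "eval_ctx F" "is_prog p"
  obtains p' where "step p p'" "b = plug F p'"
proof -
  obtain F' r s where F': "eval_ctx F'" "contract r s" "plug F p = plug F' r" "b = plug F' s"
    using assms(1) unfolding step_iff_contract by blast
  have "\<not> is_val p" using assms(3) prog_not_val by blast
  then consider G where "F' = ctx_comp F G" | G where "F = ctx_comp F' G" "G \<noteq> Hole"
    using eval_ctx_plug_eq_cases[OF assms(2) F'(1,3)] contract_not_val[OF F'(2)] by blast
  then show thesis
  proof cases
    case 1
    then have "step p (plug G s)"
      using F' unfolding step_iff_contract by (auto simp: eval_ctx_comp plug_inject)
    then show thesis using that 1 F'(4) by simp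
  next
    case 2
    then have "contract (plug G p) s" "eval_ctx G"
      using F' assms(2) by (auto simp: eval_ctx_comp plug_inject)
    then show thesis using 2 assms(3) contract_plug_prog by blast
  qed
qed

lemma val_no_step: "step a b \<Longrightarrow> \<not> is_val a"
  unfolding step_iff_contract using contract_not_val val_plug_eval_ctx by blast

lemma step_prog:
  assumes "step p r" "is_prog p"
  shows "is_prog r \<or> is_val r"
proof -
  obtain F a b where F: "eval_ctx F" "contract a b" "p = plug F a" "r = plug F b"
    using assms(1) unfolding step_iff_contract by blast
  show ?thesis
  proof (cases F)
    case Hole
    with F(2) show ?thesis using F(3,4) assms(2)
      by (cases rule: contract.cases) (auto simp: is_prog_def)
  qed (use F assms(2) in \<open>auto simp: is_prog_def\<close>)
qed

lemma step_reset_val: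
  assumes "step (Reset v) b" "is_val v"
  shows "b = v"
proof -
  obtain F r s where F: "eval_ctx F" "contract r s" "Reset v = plug F r" "b = plug F s"
    using assms(1) unfolding step_iff_contract by blast
  have "F = Hole"
    using F assms(2) contract_not_val val_plug_eval_ctx by (cases F) auto
  with F(2,3) show ?thesis using F(4) assms(2)
    by (cases rule: contract.cases) (auto simp: val_plug_eval_ctx pure_ctx_imp_eval_ctx, simp add: is_val_def)
qed

lemma steps_reset_val:
  assumes "steps (Reset v) w" "is_val v" "is_val w"
  shows "w = v"
  using assms(1)
proof (cases rule: converse_rtranclpE)
  case base
  then show ?thesis using assms(3) by (auto simp: is_val_def)
next
  case (step z)
  then have "steps v w" using step_reset_val assms(2) by blast
  then show ?thesis
    by (cases rule: converse_rtranclpE) (use assms(2) val_no_step in blast)+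
qed

section \<open>Compatible closures\<close>

lemma env_memD: "is_env H \<Longrightarrow> (a, b) \<in> H \<Longrightarrow> is_val a \<and> is_val b \<and> closed a \<and> closed b"
  unfolding is_env_def by auto

lemma is_env_insert:
  "is_env H \<Longrightarrow> is_val a \<Longrightarrow> is_val b \<Longrightarrow> closed a \<Longrightarrow> closed b \<Longrightarrow> is_env ({(a, b)} \<union> H)"
  unfolding is_env_def by auto

lemma tcomp_refl: "tcomp H t t"
  by (induction t) (auto intro: tcomp.intros)

lemma tcomp_mono: "tcomp G a b \<Longrightarrow> G \<subseteq> H \<Longrightarrow> tcomp H a b"
  by (induction rule: tcomp.induct) (auto intro: tcomp.intros)

lemma tcomp_tclos: "tcomp G a b \<Longrightarrow> G \<subseteq> tclos H \<Longrightarrow> tcomp H a b"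
  by (induction rule: tcomp.induct) (auto simp: tclos_def intro: tcomp.intros)

lemma tclos_mono: "G \<subseteq> H \<Longrightarrow> tclos G \<subseteq> tclos H"
  unfolding tclos_def using tcomp_mono by blast

lemma tclos_subset_tclos: "G \<subseteq> tclos H \<Longrightarrow> tclos G \<subseteq> tclos H"
  using tcomp_tclos by (auto simp: tclos_def)

lemma tcomp_val: "tcomp H a b \<Longrightarrow> is_env H \<Longrightarrow> is_val a \<Longrightarrow> is_val b"
  by (induction rule: tcomp.induct) (auto simp: is_val_def dest: env_memD)

lemma tcomp_AppE:
  assumes "tcomp H (App a c) t" "is_env H"
  obtains b d where "t = App b d" "tcomp H a b" "tcomp H c d"
  using assms by (cases rule: tcomp.cases) (auto simp: is_val_def dest: env_memD)

lemma tcomp_ResetE: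
  assumes "tcomp H (Reset a) t" "is_env H"
  obtains b where "t = Reset b" "tcomp H a b"
  using assms by (cases rule: tcomp.cases) (auto simp: is_val_def dest: env_memD)

lemma tcomp_ShiftE:
  assumes "tcomp H (Shift a) t" "is_env H"
  obtains b where "t = Shift b" "tcomp H a b"
  using assms by (cases rule: tcomp.cases) (auto simp: is_val_def dest: env_memD)

lemma tcomp_LamE:
  assumes "tcomp H (Lam a) t"
  obtains "(Lam a, t) \<in> H" | b where "t = Lam b" "tcomp H a b"
  using assms by (cases rule: tcomp.cases) auto

lemma tcomp_lift: "tcomp H a b \<Longrightarrow> is_env H \<Longrightarrow> tcomp H (lift k a) (lift k b)"
proof (induction arbitrary: k rule: tcomp.induct)
  case (base a b)
  then show ?case
    by (metis env_memD closed_closed_at lift_closed_at tcomp.base)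
qed (auto intro: tcomp.intros)

lemma tcomp_subst:
  "tcomp H a b \<Longrightarrow> is_env H \<Longrightarrow> tcomp H s s' \<Longrightarrow> tcomp H (subst k s a) (subst k s' b)"
proof (induction arbitrary: k s s' rule: tcomp.induct)
  case (base a b)
  then show ?case
    by (metis env_memD closed_closed_at subst_closed_at tcomp.base)
qed (auto intro!: tcomp.var tcomp.lam tcomp.app tcomp.shft tcomp.rst simp: tcomp_lift)

inductive ctcomp :: "(trm \<times> trm) set \<Rightarrow> ctx \<Rightarrow> ctx \<Rightarrow> bool" for H where
  hole: "ctcomp H Hole Hole"
| lam: "ctcomp H C C' \<Longrightarrow> ctcomp H (CLam C) (CLam C')"
| appr: "tcomp H s s' \<Longrightarrow> ctcomp H C C' \<Longrightarrow> ctcomp H (CAppR s C) (CAppR s' C')"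
| appl: "tcomp H s s' \<Longrightarrow> ctcomp H C C' \<Longrightarrow> ctcomp H (CAppL C s) (CAppL C' s')"
| shft: "ctcomp H C C' \<Longrightarrow> ctcomp H (CShift C) (CShift C')"
| rst: "ctcomp H C C' \<Longrightarrow> ctcomp H (CReset C) (CReset C')"

lemma ctcomp_refl: "ctcomp H C C"
  by (induction C) (auto intro: ctcomp.intros tcomp_refl)

lemma tcomp_plug: "ctcomp H C C' \<Longrightarrow> tcomp H t t' \<Longrightarrow> tcomp H (plug C t) (plug C' t')"
  by (induction rule: ctcomp.induct) (auto intro: tcomp.intros)

lemma ctcomp_ctx_lift: "ctcomp H C C' \<Longrightarrow> is_env H \<Longrightarrow> ctcomp H (ctx_lift k C) (ctx_lift k C')"
  by (induction arbitrary: k rule: ctcomp.induct) (auto intro: ctcomp.intros tcomp_lift)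

lemma ctcomp_eval_ctx: "ctcomp H C C' \<Longrightarrow> is_env H \<Longrightarrow> eval_ctx C \<Longrightarrow> eval_ctx C'"
  by (induction rule: ctcomp.induct) (auto dest: tcomp_val)

lemma ctcomp_pure_ctx: "ctcomp H C C' \<Longrightarrow> is_env H \<Longrightarrow> pure_ctx C \<Longrightarrow> pure_ctx C'"
  by (induction rule: ctcomp.induct) (auto dest: tcomp_val)

lemma ctcomp_plug_eval_ctxE:
  assumes "tcomp H (plug F a) t" "eval_ctx F" "is_env H"
  obtains F' a' where "t = plug F' a'" "ctcomp H F F'" "tcomp H a a'"
proof -
  have "\<exists>F' a'. t = plug F' a' \<and> ctcomp H F F' \<and> tcomp H a a'"
    using assms
  proof (induction F arbitrary: t)
    case Hole
    then show ?case using ctcomp.hole by (metis plug.simps(1))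
  next
    case (CAppR v G)
    then obtain v' u where "t = App v' u" "tcomp H v v'" "tcomp H (plug G a) u"
      by (auto elim: tcomp_AppE)
    with CAppR show ?case by (metis ctcomp.appr eval_ctx.simps(2) plug.simps(3))
  next
    case (CAppL G s)
    then obtain u s' where "t = App u s'" "tcomp H (plug G a) u" "tcomp H s s'"
      by (auto elim: tcomp_AppE)
    with CAppL show ?case by (metis ctcomp.appl eval_ctx.simps(3) plug.simps(4))
  next
    case (CReset G)
    then obtain u where "t = Reset u" "tcomp H (plug G a) u"
      by (auto elim: tcomp_ResetE)
    with CReset show ?case by (metis ctcomp.rst eval_ctx.simps(4) plug.simps(6))
  qed auto
  then show thesis using that by blast
qed

lemma cclos_ctcomp: "cclos H F F' \<Longrightarrow> ctcomp H F F'"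
  by (induction rule: cclos.induct) (auto simp: tclos_def intro: ctcomp.intros)

lemma ctcomp_cclos:
  "ctcomp H F F' \<Longrightarrow> is_env H \<Longrightarrow> eval_ctx F \<Longrightarrow> closed (plug F a) \<Longrightarrow> closed (plug F' b) \<Longrightarrow>
   cclos H F F'"
  by (induction rule: ctcomp.induct)
     (auto simp: tclos_def closed_def intro!: cclos.intros dest: tcomp_val)

lemma cclos_eval_ctx: "cclos H F F' \<Longrightarrow> eval_ctx F \<and> eval_ctx F'"
  by (induction rule: cclos.induct) auto

lemma closed_plug_cclos:
  "cclos H F F' \<Longrightarrow> closed a \<Longrightarrow> closed b \<Longrightarrow> closed (plug F a) \<and> closed (plug F' b)"
  by (induction rule: cclos.induct) (auto simp: tclos_def closed_def)

lemma cclos_ctx_comp: "cclos H A A' \<Longrightarrow> cclos H B B' \<Longrightarrow> cclos H (ctx_comp A B) (ctx_comp A' B')"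
  by (induction rule: cclos.induct) (auto intro: cclos.intros)

lemma cclos_mono: "cclos G F F' \<Longrightarrow> tclos G \<subseteq> tclos H \<Longrightarrow> cclos H F F'"
  by (induction rule: cclos.induct) (auto intro: cclos.intros)

lemma prog_plug_cclos:
  "cclos H F F' \<Longrightarrow> is_prog (plug F a) \<Longrightarrow> (is_prog a \<Longrightarrow> is_prog b) \<Longrightarrow> is_prog (plug F' b)"
  by (induction rule: cclos.induct) (auto simp: is_prog_def)


text \<open>Contraction commutes with the compatible closure, except at a beta-redex whose operators
  are related only by the environment.\<close>
lemma contract_tcomp:
  assumes "contract r s" "tcomp H r r'" "is_env H"
  obtains s' where "contract r' s'" "tcomp H s s'"
  | b b' w w' where "r = App (Lam b) w" "r' = App (Lam b') w'" "s = subst 0 w b"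
      "(Lam b, Lam b') \<in> H" "tcomp H w w'" "is_val w" "is_val w'"
  using assms(1)
proof cases
  case (beta w b)
  then obtain u w' where r': "r' = App u w'" "tcomp H (Lam b) u" "tcomp H w w'"
    using assms(2,3) by (auto elim: tcomp_AppE)
  have "is_val w'" using r'(3) assms(3) beta(3) tcomp_val by blast
  from r'(2) show thesis
  proof (cases rule: tcomp_LamE)
    case 1
    then obtain b' where "u = Lam b'" using env_memD[OF assms(3)] by (auto simp: is_val_def)
    then show thesis using that(2) 1 beta r' \<open>is_val w'\<close> by blast
  next
    case (2 b')
    then show thesis
      using that(1) beta r' \<open>is_val w'\<close> assms(3) by (blast intro: contract.beta tcomp_subst)
  qed
next
  case (shift E t)
  then obtain E' t' where "r' = Reset (plug E' (Shift t'))" "ctcomp H E E'" "tcomp H t t'"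
    using assms(2,3) pure_ctx_imp_eval_ctx
    by (auto elim!: tcomp_ResetE ctcomp_plug_eval_ctxE tcomp_ShiftE)
  moreover have "tcomp H (Lam (Reset (plug (ctx_lift 0 E) (Var 0))))
      (Lam (Reset (plug (ctx_lift 0 E') (Var 0))))"
    using \<open>ctcomp H E E'\<close> assms(3) by (auto intro!: tcomp.lam tcomp.rst tcomp.var tcomp_plug ctcomp_ctx_lift)
  ultimately show thesis using that shift assms(3)
    by (auto intro!: contract.shift tcomp.rst tcomp_subst ctcomp_pure_ctx)
next
  case reset
  then show thesis using that assms(2,3)
    by (auto elim!: tcomp_ResetE intro: contract.reset tcomp_val)
qed

lemma cclos_pure_ctx: "cclos H E E' \<Longrightarrow> pure_ctx E \<Longrightarrow> pure_ctx E'"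
  by (induction rule: cclos.induct) auto

lemma cclos_ctx_compE:
  assumes "cclos H (ctx_comp A B) F'"
  obtains A' B' where "F' = ctx_comp A' B'" "cclos H A A'" "cclos H B B'"
proof -
  have "\<exists>A' B'. F' = ctx_comp A' B' \<and> cclos H A A' \<and> cclos H B B'"
    using assms
  proof (induction A arbitrary: F')
    case Hole
    then show ?case by (metis ctx_comp.simps(1) cclos.hole)
  next
    case (CAppR v A)
    then obtain v' G where "F' = CAppR v' G" "cclos H (ctx_comp A B) G"
        "is_val v" "is_val v'" "(v, v') \<in> tclos H"
      by (auto elim: cclos.cases)
    with CAppR.IH show ?case by (metis cclos.arg ctx_comp.simps(3))
  next
    case (CAppL A t)
    then obtain t' G where "F' = CAppL G t'" "cclos H (ctx_comp A B) G" "(t, t') \<in> tclos H"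
      by (auto elim: cclos.cases)
    with CAppL.IH show ?case by (metis cclos.fn ctx_comp.simps(4))
  next
    case (CReset A)
    then obtain G where "F' = CReset G" "cclos H (ctx_comp A B) G"
      by (auto elim: cclos.cases)
    with CReset.IH show ?case by (metis cclos.rst ctx_comp.simps(6))
  qed (auto elim: cclos.cases)
  then show thesis using that by blast
qed

section \<open>Environmental bisimulations and their converse\<close>

lemma converse_insert: "converse (insert (a, b) R) = insert (b, a) (converse R)"
  by auto

definition conv :: "envrel \<Rightarrow> envrel" where
  "conv X = (converse ` fst X, (\<lambda>(E, a, b). (converse E, b, a)) ` snd X)"

lemma conv_fst_iff [simp]: "E \<in> fst (conv X) \<longleftrightarrow> converse E \<in> fst X"
proof
  assume "converse E \<in> fst X"
  then have "converse (converse E) \<in> converse ` fst X" by (rule imageI)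
  then show "E \<in> fst (conv X)" by (simp add: conv_def)
qed (auto simp: conv_def)

lemma conv_snd_iff [simp]: "(E, a, b) \<in> snd (conv X) \<longleftrightarrow> (converse E, b, a) \<in> snd X"
proof
  let ?f = "\<lambda>(E, a, b). (converse E, b, a)"
  assume "(converse E, b, a) \<in> snd X"
  then have "?f (converse E, b, a) \<in> ?f ` snd X" by (rule imageI)
  then show "(E, a, b) \<in> snd (conv X)" by (simp add: conv_def)
qed (auto simp: conv_def)

lemma conv_conv [simp]: "conv (conv X) = X"
  unfolding conv_def by (simp add: image_image case_prod_beta)

lemma is_env_converse [simp]: "is_env (converse E) \<longleftrightarrow> is_env E"
  unfolding is_env_def by auto

lemma tcomp_converse: "tcomp (converse H) a b \<longleftrightarrow> tcomp H b a"
proof -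
  have "tcomp G a b \<Longrightarrow> tcomp (converse G) b a" for G a b
    by (induction rule: tcomp.induct) (auto intro: tcomp.intros)
  then show ?thesis by force
qed

lemma tclos_converse [simp]: "(a, b) \<in> tclos (converse H) \<longleftrightarrow> (b, a) \<in> tclos H"
  unfolding tclos_def by (auto simp: tcomp_converse)

lemma cclos_converse [simp]: "cclos (converse H) F0 F1 \<longleftrightarrow> cclos H F1 F0"
proof -
  have "cclos G F0 F1 \<Longrightarrow> cclos (converse G) F1 F0" for G F0 F1
    by (induction rule: cclos.induct) (auto intro: cclos.intros)
  then show ?thesis by force
qed

text \<open>Clauses (1), (2a) with (2b), and (3) of \<open>env_bisim\<close>; clauses (2c) and (2d) are
  (2a) and (2b) for the converse relation, see \<open>prog_sim_conv_iff\<close>.\<close>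
definition reset_closed :: "envrel \<Rightarrow> bool" where
  "reset_closed X \<longleftrightarrow> (\<forall>E t0 t1. (E, t0, t1) \<in> snd X \<longrightarrow> \<not> (is_prog t0 \<and> is_prog t1) \<longrightarrow>
     (\<forall>E0 E1. pure_ctx E0 \<and> pure_ctx E1 \<and> cclos E E0 E1 \<longrightarrow>
        (E, Reset (plug E0 t0), Reset (plug E1 t1)) \<in> snd X))"

definition prog_sim :: "envrel \<Rightarrow> bool" where
  "prog_sim X \<longleftrightarrow> (\<forall>E p0 p1. (E, p0, p1) \<in> snd X \<longrightarrow> is_prog p0 \<longrightarrow> is_prog p1 \<longrightarrow>
     (\<forall>p0'. step p0 p0' \<longrightarrow> is_prog p0' \<longrightarrow>
        (\<exists>p1'. steps p1 p1' \<and> is_prog p1' \<and> (E, p0', p1') \<in> snd X)) \<and>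
     (\<forall>v0. step p0 v0 \<longrightarrow> is_val v0 \<longrightarrow>
        (\<exists>v1. steps p1 v1 \<and> is_val v1 \<and> {(v0, v1)} \<union> E \<in> fst X)))"

definition subst_closed :: "envrel \<Rightarrow> bool" where
  "subst_closed X \<longleftrightarrow> (\<forall>E\<in>fst X. \<forall>t0 t1 v0 v1. (Lam t0, Lam t1) \<in> E \<longrightarrow> (v0, v1) \<in> tclos E \<longrightarrow>
     is_val v0 \<longrightarrow> is_val v1 \<longrightarrow> (E, subst 0 v0 t0, subst 0 v1 t1) \<in> snd X)"

lemma prog_sim_conv_iff:
  "prog_sim (conv X) \<longleftrightarrow> (\<forall>E p0 p1. (E, p0, p1) \<in> snd X \<longrightarrow> is_prog p0 \<longrightarrow> is_prog p1 \<longrightarrow>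
     (\<forall>p1'. step p1 p1' \<longrightarrow> is_prog p1' \<longrightarrow>
        (\<exists>p0'. steps p0 p0' \<and> is_prog p0' \<and> (E, p0', p1') \<in> snd X)) \<and>
     (\<forall>v1. step p1 v1 \<longrightarrow> is_val v1 \<longrightarrow>
        (\<exists>v0. steps p0 v0 \<and> is_val v0 \<and> {(v0, v1)} \<union> E \<in> fst X)))"
proof -
  have all_converse: "(\<forall>E. P E) \<longleftrightarrow> (\<forall>E. P (converse E))" for P :: "env \<Rightarrow> bool"
    by (metis converse_converse)
  show ?thesis
    unfolding prog_sim_def
    by (subst all_converse) (simp add: converse_insert, iprover)
qed

lemma env_bisim_iff:
  "env_bisim X \<longleftrightarrow>
   env_relation X \<and> reset_closed X \<and> prog_sim X \<and> prog_sim (conv X) \<and> subst_closed X"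
proof -
  have sim: "prog_sim X \<and> prog_sim (conv X) \<longleftrightarrow>
    (\<forall>E p0 p1. (E, p0, p1) \<in> snd X \<longrightarrow> is_prog p0 \<longrightarrow> is_prog p1 \<longrightarrow>
       (\<forall>p0'. step p0 p0' \<longrightarrow> is_prog p0' \<longrightarrow>
          (\<exists>p1'. steps p1 p1' \<and> is_prog p1' \<and> (E, p0', p1') \<in> snd X)) \<and>
       (\<forall>v0. step p0 v0 \<longrightarrow> is_val v0 \<longrightarrow>
          (\<exists>v1. steps p1 v1 \<and> is_val v1 \<and> {(v0, v1)} \<union> E \<in> fst X)) \<and>
       (\<forall>p1'. step p1 p1' \<longrightarrow> is_prog p1' \<longrightarrow>
          (\<exists>p0'. steps p0 p0' \<and> is_prog p0' \<and> (E, p0', p1') \<in> snd X)) \<and>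
       (\<forall>v1. step p1 v1 \<longrightarrow> is_val v1 \<longrightarrow>
          (\<exists>v0. steps p0 v0 \<and> is_val v0 \<and> {(v0, v1)} \<union> E \<in> fst X)))"
    unfolding prog_sim_conv_iff unfolding prog_sim_def
    by (simp only: all_conj_distrib imp_conjR conj_assoc)
  show ?thesis
    unfolding env_bisim_def reset_closed_def subst_closed_def sim[symmetric]
    by (simp only: conj_assoc)
qed

lemma env_bisim_conv:
  assumes "env_bisim X"
  shows "env_bisim (conv X)"
proof -
  have "env_relation (conv X)"
    using assms unfolding env_bisim_def env_relation_def by (auto simp: conv_def)
  moreover have "reset_closed (conv X)"
    using assms unfolding env_bisim_iff reset_closed_def by (metis conv_snd_iff cclos_converse)
  moreover have "subst_closed (conv X)"
    using assms unfolding env_bisim_iff subst_closed_def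
    by (metis conv_fst_iff conv_snd_iff converse_iff tclos_converse)
  ultimately show ?thesis using assms by (simp add: env_bisim_iff)
qed

lemma env_bisim_fstD: "env_bisim X \<Longrightarrow> H \<in> fst X \<Longrightarrow> is_env H"
  unfolding env_bisim_iff env_relation_def by blast

lemma env_bisim_sndD: "env_bisim X \<Longrightarrow> (H, a, b) \<in> snd X \<Longrightarrow> is_env H \<and> closed a \<and> closed b"
  unfolding env_bisim_iff env_relation_def by fast

lemma env_bisim_resetD:
  "env_bisim X \<Longrightarrow> (H, t0, t1) \<in> snd X \<Longrightarrow> \<not> (is_prog t0 \<and> is_prog t1) \<Longrightarrow>
   pure_ctx E0 \<Longrightarrow> pure_ctx E1 \<Longrightarrow> cclos H E0 E1 \<Longrightarrow>
   (H, Reset (plug E0 t0), Reset (plug E1 t1)) \<in> snd X"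
  unfolding env_bisim_iff reset_closed_def by blast

lemma env_bisim_progD:
  "env_bisim X \<Longrightarrow> (H, p0, p1) \<in> snd X \<Longrightarrow> is_prog p0 \<Longrightarrow> is_prog p1 \<Longrightarrow>
   step p0 p0' \<Longrightarrow> is_prog p0' \<Longrightarrow> \<exists>p1'. steps p1 p1' \<and> is_prog p1' \<and> (H, p0', p1') \<in> snd X"
  unfolding env_bisim_iff prog_sim_def by blast

lemma env_bisim_valD:
  "env_bisim X \<Longrightarrow> (H, p0, p1) \<in> snd X \<Longrightarrow> is_prog p0 \<Longrightarrow> is_prog p1 \<Longrightarrow>
   step p0 v0 \<Longrightarrow> is_val v0 \<Longrightarrow> \<exists>v1. steps p1 v1 \<and> is_val v1 \<and> {(v0, v1)} \<union> H \<in> fst X"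
  unfolding env_bisim_iff prog_sim_def by blast

lemma env_bisim_substD:
  "env_bisim X \<Longrightarrow> H \<in> fst X \<Longrightarrow> (Lam t0, Lam t1) \<in> H \<Longrightarrow> (v0, v1) \<in> tclos H \<Longrightarrow>
   is_val v0 \<Longrightarrow> is_val v1 \<Longrightarrow> (H, subst 0 v0 t0, subst 0 v1 t1) \<in> snd X"
  unfolding env_bisim_iff subst_closed_def by blast

section \<open>Bisimulation up to context\<close>

definition progs_in_ctx :: "envrel \<Rightarrow> env \<Rightarrow> trm \<Rightarrow> trm \<Rightarrow> bool" where
  "progs_in_ctx X H t0 t1 \<longleftrightarrow> (\<exists>F0 F1 p0 p1. t0 = plug F0 p0 \<and> t1 = plug F1 p1 \<and>
     cclos H F0 F1 \<and> (H, p0, p1) \<in> snd X \<and> is_prog p0 \<and> is_prog p1)"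

definition up_to_ctx :: "envrel \<Rightarrow> env \<Rightarrow> trm \<Rightarrow> trm \<Rightarrow> bool" where
  "up_to_ctx X H t0 t1 \<longleftrightarrow>
     (H \<in> fst X \<and> (t0, t1) \<in> tclos H) \<or> progs_in_ctx X H t0 t1 \<or> (H, t0, t1) \<in> snd X"

text \<open>Environments of the closure need only be covered by the compatible closure of an
  environment of X: this absorbs the environments extended by clause (2b).\<close>
definition ctx_closure :: "envrel \<Rightarrow> envrel" where
  "ctx_closure X =
     ({G. is_env G \<and> (\<exists>H\<in>fst X. G \<subseteq> tclos H)},
      {(G, t0, t1). is_env G \<and> (\<exists>H. G \<subseteq> tclos H \<and> up_to_ctx X H t0 t1)})"

lemma ctx_closure_fst_iff [simp]:
  "G \<in> fst (ctx_closure X) \<longleftrightarrow> is_env G \<and> (\<exists>H\<in>fst X. G \<subseteq> tclos H)"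
  by (simp add: ctx_closure_def)

lemma ctx_closure_snd_iff [simp]:
  "(G, t0, t1) \<in> snd (ctx_closure X) \<longleftrightarrow> is_env G \<and> (\<exists>H. G \<subseteq> tclos H \<and> up_to_ctx X H t0 t1)"
  by (simp add: ctx_closure_def)

lemma progs_in_ctx_conv:
  "progs_in_ctx (conv X) (converse H) t1 t0 \<longleftrightarrow> progs_in_ctx X H t0 t1"
  unfolding progs_in_ctx_def by auto

lemma up_to_ctx_conv: "up_to_ctx (conv X) (converse H) t1 t0 \<longleftrightarrow> up_to_ctx X H t0 t1"
  unfolding up_to_ctx_def by (simp add: progs_in_ctx_conv)

lemma subset_tclos_converse: "converse G \<subseteq> tclos (converse H) \<longleftrightarrow> G \<subseteq> tclos H"
  by auto

lemma ctx_closure_conv: "conv (ctx_closure X) = ctx_closure (conv X)"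
proof (rule prod_eqI)
  have "(\<exists>H\<in>fst X. converse G \<subseteq> tclos H) \<longleftrightarrow> (\<exists>H\<in>fst (conv X). G \<subseteq> tclos H)" for G
    by (metis conv_fst_iff converse_converse subset_tclos_converse)
  then show "fst (conv (ctx_closure X)) = fst (ctx_closure (conv X))"
    by auto
  have "(\<exists>H. converse G \<subseteq> tclos H \<and> up_to_ctx X H t1 t0) \<longleftrightarrow>
        (\<exists>H. G \<subseteq> tclos H \<and> up_to_ctx (conv X) H t0 t1)" for G t0 t1
    by (metis converse_converse subset_tclos_converse up_to_ctx_conv)
  then have "x \<in> snd (conv (ctx_closure X)) \<longleftrightarrow> x \<in> snd (ctx_closure (conv X))" for x
    by (cases x) simp
  then show "snd (conv (ctx_closure X)) = snd (ctx_closure (conv X))" by blast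
qed

lemma progs_in_ctx_plug:
  assumes "env_bisim X" "(H, t0, t1) \<in> snd X" "cclos H F F'" "\<not> pure_ctx F"
  shows "progs_in_ctx X H (plug F t0) (plug F' t1)"
proof (cases "is_prog t0 \<and> is_prog t1")
  case True
  then show ?thesis using assms(2,3) unfolding progs_in_ctx_def by blast
next
  case False
  obtain Fo Ei where F: "F = ctx_comp Fo (CReset Ei)" "pure_ctx Ei"
    using eval_ctx_not_pure_decomp cclos_eval_ctx assms(3,4) by metis
  then obtain Fo' B where F': "F' = ctx_comp Fo' B" "cclos H Fo Fo'" "cclos H (CReset Ei) B"
    using cclos_ctx_compE assms(3) by metis
  then obtain Ei' where Ei': "B = CReset Ei'" "cclos H Ei Ei'"
    by (auto elim: cclos.cases)
  have "(H, Reset (plug Ei t0), Reset (plug Ei' t1)) \<in> snd X"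
    using env_bisim_resetD[OF assms(1,2) False] F(2) Ei'(2) cclos_pure_ctx by blast
  then show ?thesis
    unfolding progs_in_ctx_def using F(1) F'(1,2) Ei'(1)
    by (intro exI[of _ Fo] exI[of _ Fo']) (auto simp: is_prog_def)
qed

lemma tclos_step:
  assumes "env_bisim X" "H \<in> fst X" "(t0, t1) \<in> tclos H" "is_prog t0" "step t0 r0"
  obtains r1 where "step t1 r1" "(r0, r1) \<in> tclos H \<or> progs_in_ctx X H r0 r1"
proof -
  have env: "is_env H" using env_bisim_fstD assms(1,2) by blast
  obtain F r s where F: "eval_ctx F" "contract r s" "t0 = plug F r" "r0 = plug F s"
    using assms(5) unfolding step_iff_contract by blast
  have t: "tcomp H (plug F r) t1" "closed t0" "closed t1"
    using assms(3) F(3) by (auto simp: tclos_def)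
  then obtain F' r' where F': "t1 = plug F' r'" "ctcomp H F F'" "tcomp H r r'"
    using ctcomp_plug_eval_ctxE env F(1) by metis
  have "eval_ctx F'" using ctcomp_eval_ctx F'(2) env F(1) by blast
  from F(2) F'(3) env show thesis
  proof (cases rule: contract_tcomp)
    case (1 s')
    have "step t1 (plug F' s')"
      using F'(1) \<open>eval_ctx F'\<close> 1(1) step_contract by blast
    moreover have "(r0, plug F' s') \<in> tclos H"
      using tcomp_plug[OF F'(2) 1(2)] F(4) closed_step assms(5) t(2) calculation t(3)
      by (auto simp: tclos_def)
    ultimately show thesis using that by blast
  next
    case (2 b b' w w')
    have "closed_at 0 (App (Lam b) w)" "closed_at 0 (App (Lam b') w')"
      using closed_at_plug_eval_ctxD F(1,3) F'(1) \<open>eval_ctx F'\<close> t(2,3) 2(1,2)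
      unfolding closed_def by blast+
    then have "(w, w') \<in> tclos H"
      using 2(5) by (simp add: tclos_def closed_def)
    then have "(H, subst 0 w b, subst 0 w' b') \<in> snd X"
      using env_bisim_substD assms(1,2) 2 by blast
    moreover have "cclos H F F'"
      using ctcomp_cclos F'(1,2) env F(1,3) t(2,3) by blast
    moreover have "\<not> pure_ctx F"
      using assms(4) F(3) 2(1) prog_plug_pure_ctx by (auto simp: is_prog_def)
    moreover have "step t1 (plug F' (subst 0 w' b'))"
      using F'(1) \<open>eval_ctx F'\<close> 2(2,7) step_contract contract.beta by metis
    ultimately show thesis
      using that progs_in_ctx_plug[OF assms(1)] F(4) 2(3) by blast
  qed
qed

lemma progs_in_ctx_prog: "progs_in_ctx X H r0 r1 \<Longrightarrow> is_prog r0 \<Longrightarrow> is_prog r1"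
  unfolding progs_in_ctx_def using prog_plug_cclos by blast

lemma progs_in_ctx_not_val: "progs_in_ctx X H r0 r1 \<Longrightarrow> \<not> is_val r0"
  unfolding progs_in_ctx_def using val_plug_eval_ctx cclos_eval_ctx prog_not_val by blast

text \<open>How p1 answers a reduction of its partner to r0; the environment may grow from H to H'.\<close>
definition matches_step :: "envrel \<Rightarrow> env \<Rightarrow> trm \<Rightarrow> trm \<Rightarrow> bool" where
  "matches_step X H r0 p1 \<longleftrightarrow> (\<exists>r1 H'. steps p1 r1 \<and> tclos H \<subseteq> tclos H' \<and>
     (is_prog r0 \<and> is_prog r1 \<and> up_to_ctx X H' r0 r1 \<or>
      is_val r0 \<and> is_val r1 \<and> H' \<in> fst X \<and> (r0, r1) \<in> tclos H'))"

lemma matches_step_tclos: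
  assumes "env_bisim X" "H' \<in> fst X" "(r0, r1) \<in> tclos H'" "steps p1 r1" "tclos H \<subseteq> tclos H'"
    and "is_prog r0 \<or> is_val r0"
  shows "matches_step X H r0 p1"
proof -
  have "is_env H'" "tcomp H' r0 r1" using assms(1-3) env_bisim_fstD by (auto simp: tclos_def)
  then have "is_prog r0 \<Longrightarrow> is_prog r1" "is_val r0 \<Longrightarrow> is_val r1"
    by (auto simp: is_prog_def elim: tcomp_ResetE intro: tcomp_val)
  then show ?thesis
    using assms unfolding matches_step_def up_to_ctx_def by blast
qed

lemma tclos_matches:
  assumes "env_bisim X" "H \<in> fst X" "(p0, p1) \<in> tclos H" "is_prog p0" "step p0 r0"
  shows "matches_step X H r0 p1"
proof -
  obtain r1 where r1: "step p1 r1" "(r0, r1) \<in> tclos H \<or> progs_in_ctx X H r0 r1"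
    using tclos_step assms by blast
  have "is_prog r0 \<or> is_val r0" using step_prog assms(4,5) by blast
  from r1(2) show ?thesis
  proof
    assume "(r0, r1) \<in> tclos H"
    then show ?thesis using matches_step_tclos assms(1,2) r1(1) \<open>is_prog r0 \<or> is_val r0\<close> by blast
  next
    assume "progs_in_ctx X H r0 r1"
    then show ?thesis
      using r1(1) \<open>is_prog r0 \<or> is_val r0\<close> progs_in_ctx_prog progs_in_ctx_not_val
      unfolding matches_step_def up_to_ctx_def by blast
  qed
qed

lemma progs_in_ctx_matches:
  assumes "env_bisim X" "progs_in_ctx X H p0 p1" "is_prog p0" "step p0 r0"
  shows "matches_step X H r0 p1"
proof -
  obtain F0 F1 q0 q1 where q: "p0 = plug F0 q0" "p1 = plug F1 q1" "cclos H F0 F1"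
      "(H, q0, q1) \<in> snd X" "is_prog q0" "is_prog q1"
    using assms(2) unfolding progs_in_ctx_def by blast
  have F: "eval_ctx F0" "eval_ctx F1" using cclos_eval_ctx q(3) by blast+
  obtain q0' where q0': "step q0 q0'" "r0 = plug F0 q0'"
    using step_plug_prog assms(4) q(1,5) F(1) by metis
  have r0: "is_prog r0 \<or> is_val r0" using step_prog assms(3,4) by blast
  consider "is_prog q0'" | "is_val q0'" using step_prog q0'(1) q(5) by blast
  then show ?thesis
  proof cases
    case 1
    then obtain q1' where q1': "steps q1 q1'" "is_prog q1'" "(H, q0', q1') \<in> snd X"
      using env_bisim_progD assms(1) q(4-6) q0'(1) by blast
    have in_ctx: "progs_in_ctx X H r0 (plug F1 q1')"
      unfolding progs_in_ctx_def using q0'(2) q(3) q1'(2,3) 1 by blast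
    then have "is_prog r0" "is_prog (plug F1 q1')"
      using r0 progs_in_ctx_not_val progs_in_ctx_prog by blast+
    moreover have "steps p1 (plug F1 q1')" using steps_plug_eval_ctx[OF q1'(1) F(2)] q(2) by simp
    ultimately show ?thesis
      using in_ctx unfolding matches_step_def up_to_ctx_def by blast
  next
    case 2
    then obtain w1 where w1: "steps q1 w1" "is_val w1" "{(q0', w1)} \<union> H \<in> fst X"
      using env_bisim_valD assms(1) q(4-6) q0'(1) by blast
    let ?H' = "{(q0', w1)} \<union> H"
    \<comment> \<open>the returned values form a pair of \<open>?H'\<close>, so the reducts become compatible\<close>
    have "closed q0'" "closed w1" using env_bisim_fstD[OF assms(1) w1(3)] env_memD by blast+
    have sub: "tclos H \<subseteq> tclos ?H'" by (rule tclos_mono) blast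
    then have "cclos ?H' F0 F1" using cclos_mono q(3) by blast
    then have "tcomp ?H' r0 (plug F1 w1)"
      using tcomp_plug[OF cclos_ctcomp tcomp.base[of q0' w1]] q0'(2) by simp
    then have "(r0, plug F1 w1) \<in> tclos ?H'"
      using closed_plug_cclos q(3) q0'(2) \<open>closed q0'\<close> \<open>closed w1\<close> by (simp add: tclos_def)
    moreover have "steps p1 (plug F1 w1)" using steps_plug_eval_ctx[OF w1(1) F(2)] q(2) by simp
    ultimately show ?thesis
      using matches_step_tclos[OF assms(1) w1(3)] sub r0 by blast
  qed
qed

lemma env_bisim_matches:
  assumes "env_bisim X" "(H, p0, p1) \<in> snd X" "is_prog p0" "is_prog p1" "step p0 r0"
  shows "matches_step X H r0 p1"
  using step_prog[OF assms(5,3)]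
proof
  assume "is_prog r0"
  then obtain r1 where "steps p1 r1" "is_prog r1" "(H, r0, r1) \<in> snd X"
    using env_bisim_progD assms by blast
  then show ?thesis
    using \<open>is_prog r0\<close> unfolding matches_step_def up_to_ctx_def by blast
next
  assume "is_val r0"
  then obtain v1 where v1: "steps p1 v1" "is_val v1" "{(r0, v1)} \<union> H \<in> fst X"
    using env_bisim_valD assms by blast
  then have "(r0, v1) \<in> tclos ({(r0, v1)} \<union> H)"
    using env_bisim_fstD[OF assms(1) v1(3)] env_memD by (auto simp: tclos_def intro: tcomp.base)
  moreover have "tclos H \<subseteq> tclos ({(r0, v1)} \<union> H)" by (rule tclos_mono) blast
  ultimately show ?thesis
    using \<open>is_val r0\<close> v1 unfolding matches_step_def by blast
qed

lemma up_to_ctx_matches: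
  assumes "env_bisim X" "up_to_ctx X H p0 p1" "is_prog p0" "is_prog p1" "step p0 r0"
  shows "matches_step X H r0 p1"
  using assms(2) unfolding up_to_ctx_def
  using tclos_matches progs_in_ctx_matches env_bisim_matches assms by blast

lemma prog_sim_ctx_closure:
  assumes "env_bisim X"
  shows "prog_sim (ctx_closure X)"
  unfolding prog_sim_def
proof (intro allI impI conjI)
  fix G p0 p1 r0
  assume p: "(G, p0, p1) \<in> snd (ctx_closure X)" "is_prog p0" "is_prog p1" "step p0 r0"
  then obtain H where G: "is_env G" "G \<subseteq> tclos H" "up_to_ctx X H p0 p1" by auto
  then obtain r1 H' where r1: "steps p1 r1" "tclos H \<subseteq> tclos H'"
      "is_prog r0 \<and> is_prog r1 \<and> up_to_ctx X H' r0 r1 \<or>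
       is_val r0 \<and> is_val r1 \<and> H' \<in> fst X \<and> (r0, r1) \<in> tclos H'"
    using up_to_ctx_matches[OF assms G(3) p(2-4)] unfolding matches_step_def by blast
  {
    assume "is_prog r0"
    then show "\<exists>p1'. steps p1 p1' \<and> is_prog p1' \<and> (G, r0, p1') \<in> snd (ctx_closure X)"
      using G r1 prog_not_val by auto
  next
    assume "is_val r0"
    then have "is_val r1" "H' \<in> fst X" "(r0, r1) \<in> tclos H'" using r1(3) prog_not_val by auto
    moreover have "is_env ({(r0, r1)} \<union> G)"
      using G(1) \<open>is_val r0\<close> calculation by (intro is_env_insert) (auto simp: tclos_def)
    ultimately show "\<exists>v1. steps p1 v1 \<and> is_val v1 \<and> {(r0, v1)} \<union> G \<in> fst (ctx_closure X)"
      using G(2) r1(1,2) by auto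
  }
qed

lemma up_to_ctx_closed:
  assumes "env_bisim X" "up_to_ctx X H t0 t1"
  shows "closed t0 \<and> closed t1"
  using assms(2) unfolding up_to_ctx_def progs_in_ctx_def
proof (elim disjE exE conjE)
  fix F0 F1 p0 p1
  assume "t0 = plug F0 p0" "t1 = plug F1 p1" "cclos H F0 F1" "(H, p0, p1) \<in> snd X"
  then show ?thesis using env_bisim_sndD[OF assms(1)] closed_plug_cclos by blast
qed (use env_bisim_sndD[OF assms(1)] in \<open>auto simp: tclos_def\<close>)

lemma up_to_ctx_reset:
  assumes "env_bisim X" "up_to_ctx X H t0 t1" "\<not> (is_prog t0 \<and> is_prog t1)"
    and "pure_ctx E0" "pure_ctx E1" "cclos H E0 E1"
  shows "up_to_ctx X H (Reset (plug E0 t0)) (Reset (plug E1 t1))"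
  using assms(2)[unfolded up_to_ctx_def]
proof (elim disjE conjE)
  assume "H \<in> fst X" "(t0, t1) \<in> tclos H"
  moreover have "closed (plug E0 t0) \<and> closed (plug E1 t1)"
    using closed_plug_cclos assms(6) calculation(2) by (auto simp: tclos_def)
  ultimately show ?thesis
    using tcomp_plug[OF cclos_ctcomp[OF assms(6)]]
    by (auto simp: up_to_ctx_def tclos_def closed_def intro: tcomp.rst)
next
  assume "progs_in_ctx X H t0 t1"
  then obtain F0 F1 p0 p1 where "t0 = plug F0 p0" "t1 = plug F1 p1" "cclos H F0 F1"
      "(H, p0, p1) \<in> snd X" "is_prog p0" "is_prog p1"
    unfolding progs_in_ctx_def by blast
  moreover have "cclos H (CReset (ctx_comp E0 F0)) (CReset (ctx_comp E1 F1))"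
    using cclos.rst cclos_ctx_comp assms(6) calculation(3) by blast
  ultimately show ?thesis
    unfolding up_to_ctx_def progs_in_ctx_def
    by (metis plug.simps(6) plug_ctx_comp)
next
  assume "(H, t0, t1) \<in> snd X"
  then show ?thesis using env_bisim_resetD assms unfolding up_to_ctx_def by blast
qed

lemma up_to_ctx_subst:
  assumes "env_bisim X" "H \<in> fst X" "(Lam t0, Lam t1) \<in> tclos H" "(w0, w1) \<in> tclos H"
    and "is_val w0" "is_val w1"
  shows "up_to_ctx X H (subst 0 w0 t0) (subst 0 w1 t1)"
proof -
  have env: "is_env H" using env_bisim_fstD assms(1,2) by blast
  have t: "tcomp H (Lam t0) (Lam t1)" "closed_at 1 t0" "closed_at 1 t1"
    using assms(3) by (auto simp: tclos_def closed_def)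
  have w: "tcomp H w0 w1" "closed_at 0 w0" "closed_at 0 w1"
    using assms(4) by (auto simp: tclos_def closed_def)
  from t(1) show ?thesis
  proof (cases rule: tcomp_LamE)
    case 1
    then show ?thesis
      unfolding up_to_ctx_def using env_bisim_substD assms by blast
  next
    case 2
    then have "tcomp H (subst 0 w0 t0) (subst 0 w1 t1)"
      using tcomp_subst env w(1) by blast
    then show ?thesis
      unfolding up_to_ctx_def using assms(2) t(2,3) w(2,3) closed_at_subst
      by (simp add: tclos_def closed_def)
  qed
qed

lemma env_bisim_ctx_closure:
  assumes "env_bisim X"
  shows "env_bisim (ctx_closure X)"
proof -
  have "env_relation (ctx_closure X)"
    unfolding env_relation_def ctx_closure_def using up_to_ctx_closed[OF assms] by auto
  moreover have "reset_closed (ctx_closure X)"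
    unfolding reset_closed_def
  proof (intro allI impI, elim conjE)
    fix G t0 t1 E0 E1
    assume "(G, t0, t1) \<in> snd (ctx_closure X)" "\<not> (is_prog t0 \<and> is_prog t1)"
      "pure_ctx E0" "pure_ctx E1" "cclos G E0 E1"
    then show "(G, Reset (plug E0 t0), Reset (plug E1 t1)) \<in> snd (ctx_closure X)"
      using up_to_ctx_reset[OF assms] cclos_mono tclos_subset_tclos by auto
  qed
  moreover have "subst_closed (ctx_closure X)"
    unfolding subst_closed_def
  proof (intro ballI allI impI)
    fix G t0 t1 v0 v1
    assume "G \<in> fst (ctx_closure X)" "(Lam t0, Lam t1) \<in> G" "(v0, v1) \<in> tclos G"
      "is_val v0" "is_val v1"
    then obtain H where "is_env G" "H \<in> fst X" "G \<subseteq> tclos H" by auto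
    then have "up_to_ctx X H (subst 0 v0 t0) (subst 0 v1 t1)"
      using up_to_ctx_subst[OF assms] tclos_subset_tclos \<open>(Lam t0, Lam t1) \<in> G\<close>
        \<open>(v0, v1) \<in> tclos G\<close> \<open>is_val v0\<close> \<open>is_val v1\<close> by blast
    with \<open>is_env G\<close> \<open>G \<subseteq> tclos H\<close>
    show "(G, subst 0 v0 t0, subst 0 v1 t1) \<in> snd (ctx_closure X)" by auto
  qed
  moreover have "prog_sim (conv (ctx_closure X))"
    using prog_sim_ctx_closure env_bisim_conv[OF assms] by (simp add: ctx_closure_conv)
  ultimately show ?thesis
    using prog_sim_ctx_closure[OF assms] by (simp add: env_bisim_iff)
qed

lemma env_bisim_val_env:
  assumes "env_bisim X" "(E, v0, v1) \<in> snd X" "is_val v0" "is_val v1"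
  shows "{(v0, v1)} \<union> E \<in> fst X"
proof -
  have "(E, Reset v0, Reset v1) \<in> snd X"
    using env_bisim_resetD[OF assms(1,2) _ _ _ cclos.hole] assms(3) prog_not_val by auto
  moreover have "step (Reset v0) v0" using step.reset[of Hole v0] assms(3) by simp
  ultimately obtain w1 where "steps (Reset v1) w1" "is_val w1" "{(v0, w1)} \<union> E \<in> fst X"
    using env_bisim_valD[OF assms(1)] assms(3) unfolding is_prog_def by blast
  then show ?thesis using steps_reset_val assms(4) by blast
qed

theorem lemma13:
  assumes "is_env E"
    and "closed v0" and "is_val v0" and "closed v1" and "is_val v1"
    and "bisim_p E v0 v1"
    and "closed (plug C v0)" and "closed (plug C v1)"
  shows "bisim_p E (plug C v0) (plug C v1)"
proof -
  obtain X where X: "env_bisim X" "(E, v0, v1) \<in> snd X"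
    using assms(6) unfolding bisim_p_def by blast
  let ?H = "{(v0, v1)} \<union> E"
  have "?H \<in> fst X" using env_bisim_val_env X assms(3,5) by blast
  moreover have "E \<subseteq> tclos ?H"
    using assms(1) unfolding is_env_def tclos_def by (auto intro: tcomp.base)
  moreover have "(plug C v0, plug C v1) \<in> tclos ?H"
    using tcomp_plug[OF ctcomp_refl tcomp.base[of v0 v1 ?H]] assms(7,8) by (simp add: tclos_def)
  ultimately have "(E, plug C v0, plug C v1) \<in> snd (ctx_closure X)"
    using assms(1) by (auto simp: up_to_ctx_def)
  then show ?thesis
    using env_bisim_ctx_closure[OF X(1)] unfolding bisim_p_def by blast
qed

end
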